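(* Let $(\gamma,d)$ be a metric space homeomorphic to $[0,1]$, equipped with a total order $\le$ induced by a homeomorphism from $[0,1]$. Let $(x_i,z_i,y_i)_{i\in\mathbb{N}}$ be triples of points of $\gamma$ with $x_i\le z_i\le y_i$ and $x_i\ne y_i$ for each $i$. If $$\lim_{i\to\infty}\frac{d(x_i,y_i)}{\max\{d(x_i,z_i),d(z_i,y_i)\}}=0,$$ then $\lim_{i\to\infty}\max\{d(x_i,z_i),d(z_i,y_i)\}=0$. *)

theory Defs
  imports "HOL-Analysis.Analysis"
begin

text \<open>Order on a curve induced by a homeomorphism h : [0,1] -> gamma with inverse g:
  a \<le> b iff g a \<le> g b.\<close>
definition curve_le :: "('a \<Rightarrow> real) \<Rightarrow> 'a \<Rightarrow> 'a \<Rightarrow> bool" where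
  "curve_le g a b \<longleftrightarrow> g a \<le> g b"

end

theory Submission
  imports Defs
begin

text \<open>The set of ordered triples on \<open>\<gamma>\<close> whose larger gap is at least \<open>\<epsilon>\<close> is compact,
  and on it the distance between the outer points never vanishes (if \<open>a = c\<close> the order
  forces \<open>a = b = c\<close>). So that distance has a positive minimum \<open>\<delta>\<close>, while the larger gap is
  at most the diameter of \<open>\<gamma>\<close>; hence the ratio in the hypothesis is at least
  \<open>\<delta> / diameter \<gamma>\<close> whenever the larger gap is at least \<open>\<epsilon>\<close>.\<close>

lemma compact_ordered_triples_outer_dist_bounded_below:
  fixes S :: "'a::metric_space set" and g :: "'a \<Rightarrow> real"
  assumes "compact S" and g_cont: "continuous_on S g" and g_inj: "inj_on g S" and "\<epsilon> > 0"
  obtains \<delta> where "\<delta> > 0"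
    and "\<And>a b c. \<lbrakk>a \<in> S; b \<in> S; c \<in> S; g a \<le> g b; g b \<le> g c; \<epsilon> \<le> max (dist a b) (dist b c)\<rbrakk>
           \<Longrightarrow> \<delta> \<le> dist a c"
proof -
  define \<phi> where "\<phi> = (\<lambda>(a, b, c). (g b - g a, g c - g b, max (dist a b) (dist b c)))"
  define T where "T = (S \<times> S \<times> S) \<inter> \<phi> -` ({0..} \<times> {0..} \<times> {\<epsilon>..})"
  have T_iff: "(a, b, c) \<in> T \<longleftrightarrow>
      a \<in> S \<and> b \<in> S \<and> c \<in> S \<and> g a \<le> g b \<and> g b \<le> g c \<and> \<epsilon> \<le> max (dist a b) (dist b c)"
    for a b c by (auto simp: T_def \<phi>_def)
  have S3: "compact (S \<times> S \<times> S)" using \<open>compact S\<close> by (intro compact_Times)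
  have "continuous_on (S \<times> S \<times> S) \<phi>"
    unfolding \<phi>_def case_prod_beta
    by (intro continuous_intros continuous_on_compose2[OF g_cont]) auto
  then have "closed T"
    unfolding T_def
    by (rule continuous_closed_preimage[OF _ compact_imp_closed[OF S3]]) (auto intro!: closed_Times)
  then have "compact T"
    using compact_Int_closed[OF S3 \<open>closed T\<close>] by (simp add: T_def Int_absorb1)
  show thesis
  proof (cases "T = {}")
    case True
    then show thesis using that[of 1] T_iff by fastforce
  next
    case False
    have "continuous_on T (\<lambda>(a, b, c). dist a c)"
      unfolding case_prod_beta by (intro continuous_intros)
    then obtain q where "q \<in> T" and q_min: "\<And>p. p \<in> T \<Longrightarrow>
        (\<lambda>(a, b, c). dist a c) q \<le> (\<lambda>(a, b, c). dist a c) p"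
      using continuous_attains_inf[OF \<open>compact T\<close> False] by blast
    obtain a b c where q: "q = (a, b, c)" by (cases q) auto
    have "a \<noteq> c"
    proof
      assume "a = c"
      with \<open>q \<in> T\<close> have "g a = g b" "g b = g c" by (auto simp: q T_iff)
      with \<open>q \<in> T\<close> g_inj have "a = b" "b = c" by (auto simp: q T_iff inj_on_def)
      with \<open>q \<in> T\<close> \<open>\<epsilon> > 0\<close> show False by (auto simp: q T_iff)
    qed
    then show thesis
      using that[of "dist a c"] q_min by (force simp: q T_iff)
  qed
qed

lemma tendsto_0_if_ratio_tendsto_0:
  fixes r m :: "nat \<Rightarrow> real"
  assumes ratio: "(\<lambda>i. r i / m i) \<longlonglongrightarrow> 0"
    and m_nonneg: "\<And>i. 0 \<le> m i" and m_bound: "\<And>i. m i \<le> D" and "0 < D"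
    and r_lower: "\<And>\<epsilon>. \<epsilon> > 0 \<Longrightarrow> \<exists>\<delta>>0. \<forall>i. \<epsilon> \<le> m i \<longrightarrow> \<delta> \<le> r i"
  shows "m \<longlonglongrightarrow> 0"
proof (rule tendstoI)
  fix \<epsilon> :: real
  assume "\<epsilon> > 0"
  then obtain \<delta> where "\<delta> > 0" and \<delta>: "\<And>i. \<epsilon> \<le> m i \<Longrightarrow> \<delta> \<le> r i"
    using r_lower by blast
  have "\<forall>\<^sub>F i in sequentially. r i / m i < \<delta> / D"
    using order_tendstoD(2)[OF ratio] \<open>\<delta> > 0\<close> \<open>0 < D\<close> by simp
  then show "\<forall>\<^sub>F i in sequentially. dist (m i) 0 < \<epsilon>"
  proof (rule eventually_mono)
    fix i
    assume small: "r i / m i < \<delta> / D"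
    show "dist (m i) 0 < \<epsilon>"
    proof (rule ccontr)
      assume "\<not> dist (m i) 0 < \<epsilon>"
      then have "\<epsilon> \<le> m i" using m_nonneg[of i] by simp
      then have "\<delta> / D \<le> r i / m i"
        using \<delta>[of i] \<open>\<delta> > 0\<close> \<open>\<epsilon> > 0\<close> m_bound[of i] by (intro frac_le) auto
      with small show False by simp
    qed
  qed
qed

theorem lemma4p1:
  fixes \<gamma> :: "'a::metric_space set" and h :: "real \<Rightarrow> 'a" and g :: "'a \<Rightarrow> real"
    and x z y :: "nat \<Rightarrow> 'a"
  assumes hom: "homeomorphism {0..1} \<gamma> h g"
    and mem: "\<And>i. x i \<in> \<gamma> \<and> z i \<in> \<gamma> \<and> y i \<in> \<gamma>"
    and ord1: "\<And>i. curve_le g (x i) (z i)"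
    and ord2: "\<And>i. curve_le g (z i) (y i)"
    and ne: "\<And>i. x i \<noteq> y i"
    and lim: "(\<lambda>i. dist (x i) (y i) / max (dist (x i) (z i)) (dist (z i) (y i))) \<longlonglongrightarrow> 0"
  shows "(\<lambda>i. max (dist (x i) (z i)) (dist (z i) (y i))) \<longlonglongrightarrow> 0"
proof (rule tendsto_0_if_ratio_tendsto_0[OF lim])
  have "compact \<gamma>"
    using hom compact_continuous_image[of "{0..1}" h] by (auto simp: homeomorphism_def)
  moreover have "continuous_on \<gamma> g" "inj_on g \<gamma>"
    using hom by (auto simp: homeomorphism_def intro: inj_on_inverseI)
  ultimately show "\<exists>\<delta>>0. \<forall>i. \<epsilon> \<le> max (dist (x i) (z i)) (dist (z i) (y i)) \<longrightarrow> \<delta> \<le> dist (x i) (y i)"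
    if "\<epsilon> > 0" for \<epsilon>
    using compact_ordered_triples_outer_dist_bounded_below[of \<gamma> g \<epsilon>] that mem ord1 ord2
    by (metis curve_le_def)
  show "max (dist (x i) (z i)) (dist (z i) (y i)) \<le> diameter \<gamma> + 1" for i
    using diameter_bounded_bound[OF compact_imp_bounded[OF \<open>compact \<gamma>\<close>]] mem[of i]
    by (smt (verit) max_def)
  show "0 < diameter \<gamma> + 1"
    by (smt (verit) diameter_ge_0 compact_imp_bounded[OF \<open>compact \<gamma>\<close>])
qed (simp add: le_max_iff_disj)

end
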